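(* Let $\mathbf{A}=(\mathcal{P},\mathcal{L},\parallel)$ and $\mathbf{A}'=(\mathcal{P}',\mathcal{L}',\parallel')$ be affine spaces with $\dim\mathbf{A}'\ge 3$. Suppose that $\varphi:\mathcal{L}\to\mathcal{L}'$ is a bijection satisfying $$a\sim b\implies a^\varphi\sim' b^\varphi\quad\text{for all }a,b\in\mathcal{L}.$$ Then $$\lambda:\mathcal{P}\to\mathcal{P}',\qquad a\cap b\mapsto a^\varphi\cap b^\varphi\quad(a,b\in\mathcal{L},\ a\approx b)$$ is a well-defined injection that maps collinear triples of points to collinear triples and non-collinear triples to non-collinear triples. Moreover, $\mathcal{L}(Q)^\varphi=\mathcal{L}'(Q^\lambda)$ for all $Q\in\mathcal{P}$.
   Context: An affine space $\mathbf{A}=(\mathcal{P},\mathcal{L},\parallel)$ has point set $\mathcal{P}$, line set $\mathcal{L}$ (lines viewed as subsets of $\mathcal{P}$) and parallelism $\parallel$. Two lines $a,b$ are related, $a\sim b$, if $a\cap b\neq\emptyset$; adjacent, $a\approx b$, if $a\sim b$ and $a\ne b$; analogously $\sim'$ in $\mathbf{A}'$. For a point $Q\in\mathcal{P}$, $\mathcal{L}(Q)$ denotes the star of lines with centre $Q$, i.e. the set of all lines of $\mathbf{A}$ through $Q$; similarly $\mathcal{L}'(Q')$ in $\mathbf{A}'$. Images are written $x^\varphi$, and $\mathcal{L}(Q)^\varphi=\{x^\varphi: x\in\mathcal{L}(Q)\}$. *)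

theory Defs
  imports Main
begin

record 'p affine_structure =
  pts :: "'p set"
  lns :: "'p set set"
  par :: "'p set \<Rightarrow> 'p set \<Rightarrow> bool"

definition collinear :: "('p, 'x) affine_structure_scheme \<Rightarrow> 'p \<Rightarrow> 'p \<Rightarrow> 'p \<Rightarrow> bool" where
  "collinear A x y z \<longleftrightarrow> (\<exists>l\<in>lns A. x \<in> l \<and> y \<in> l \<and> z \<in> l)"

text \<open>Affine space: a linear space (every line has at least two points, two distinct
points lie on exactly one line), parallelism an equivalence relation on lines,
the parallel axiom (Euclid) and the triangle axiom (Tamaschke).\<close>

definition affine_space :: "('p, 'x) affine_structure_scheme \<Rightarrow> bool" where
  "affine_space A \<longleftrightarrow>
     (\<forall>l\<in>lns A. l \<subseteq> pts A \<and> (\<exists>x y. x \<in> l \<and> y \<in> l \<and> x \<noteq> y)) \<and>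
     (\<forall>x\<in>pts A. \<forall>y\<in>pts A. x \<noteq> y \<longrightarrow> (\<exists>!l. l \<in> lns A \<and> x \<in> l \<and> y \<in> l)) \<and>
     (\<forall>a b. par A a b \<longrightarrow> a \<in> lns A \<and> b \<in> lns A) \<and>
     (\<forall>a\<in>lns A. par A a a) \<and>
     (\<forall>a b. par A a b \<longrightarrow> par A b a) \<and>
     (\<forall>a b c. par A a b \<longrightarrow> par A b c \<longrightarrow> par A a c) \<and>
     (\<forall>a\<in>lns A. \<forall>q\<in>pts A. \<exists>!m. m \<in> lns A \<and> q \<in> m \<and> par A m a) \<and>
     (\<forall>p q r p' q' a b c a' b' c'.
        p \<in> pts A \<and> q \<in> pts A \<and> r \<in> pts A \<and> p' \<in> pts A \<and> q' \<in> pts A \<and>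
        \<not> collinear A p q r \<and> p' \<noteq> q' \<and>
        a \<in> lns A \<and> p \<in> a \<and> q \<in> a \<and>
        b \<in> lns A \<and> p \<in> b \<and> r \<in> b \<and>
        c \<in> lns A \<and> q \<in> c \<and> r \<in> c \<and>
        a' \<in> lns A \<and> p' \<in> a' \<and> q' \<in> a' \<and> par A a a' \<and>
        b' \<in> lns A \<and> p' \<in> b' \<and> par A b b' \<and>
        c' \<in> lns A \<and> q' \<in> c' \<and> par A c c'
        \<longrightarrow> b' \<inter> c' \<noteq> {})"

definition subspace :: "('p, 'x) affine_structure_scheme \<Rightarrow> 'p set \<Rightarrow> bool" where
  "subspace A S \<longleftrightarrow> S \<subseteq> pts A \<and>
     (\<forall>l\<in>lns A. \<forall>x y. x \<in> l \<and> y \<in> l \<and> x \<in> S \<and> y \<in> S \<and> x \<noteq> y \<longrightarrow> l \<subseteq> S) \<and>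
     (\<forall>l m. l \<subseteq> S \<and> par A l m \<and> m \<inter> S \<noteq> {} \<longrightarrow> m \<subseteq> S)"

definition span :: "('p, 'x) affine_structure_scheme \<Rightarrow> 'p set \<Rightarrow> 'p set" where
  "span A X = \<Inter>{S. subspace A S \<and> X \<subseteq> S}"

text \<open>dim A \<ge> 3: some plane (span of three non-collinear points) is a proper subspace.\<close>

definition dim_ge_3 :: "('p, 'x) affine_structure_scheme \<Rightarrow> bool" where
  "dim_ge_3 A \<longleftrightarrow> (\<exists>p\<in>pts A. \<exists>q\<in>pts A. \<exists>r\<in>pts A. \<exists>s\<in>pts A.
      \<not> collinear A p q r \<and> s \<notin> span A {p, q, r})"

definition star :: "('p, 'x) affine_structure_scheme \<Rightarrow> 'p \<Rightarrow> 'p set set" where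
  "star A Q = {l \<in> lns A. Q \<in> l}"

end

theory Submission
  imports Defs
begin

(* Pairwise intersecting
   lines are concurrent or lie in a common plane; in dimension >= 3 some line k
   misses any given plane, while the preimage of k meets a line of L(Q), so k would
   meet the plane.  Hence the image of L(Q) is concurrent and lam Q is taken to be
   a common point.  If lam identified two points it would be constant, so lam Q
   would lie on every line, which is absurd since there are skew lines.  With
   injectivity, incidence is reflected: lam Q lies on phi l only if Q lies on l. *)

definition join :: "('p,'x) affine_structure_scheme \<Rightarrow> 'p \<Rightarrow> 'p \<Rightarrow> 'p set" where
  "join A x y = (THE l. l \<in> lns A \<and> x \<in> l \<and> y \<in> l)"

definition parl :: "('p,'x) affine_structure_scheme \<Rightarrow> 'p \<Rightarrow> 'p set \<Rightarrow> 'p set" where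
  "parl A w l = (THE m. m \<in> lns A \<and> w \<in> m \<and> par A m l)"

definition plane :: "('p,'x) affine_structure_scheme \<Rightarrow> 'p set \<Rightarrow> 'p set \<Rightarrow> 'p set" where
  "plane A g h = {w \<in> pts A. parl A w h \<inter> g \<noteq> {}}"

locale affine_geom =
  fixes A :: "('p,'x) affine_structure_scheme"
  assumes affine: "affine_space A"
begin

lemmas affine_conjs = affine[unfolded affine_space_def]

lemma line_subset: "l \<in> lns A \<Longrightarrow> l \<subseteq> pts A"
  using affine_conjs[THEN conjunct1] by blast

lemma line_two_points: "l \<in> lns A \<Longrightarrow> \<exists>x y. x \<in> l \<and> y \<in> l \<and> x \<noteq> y"
  using affine_conjs[THEN conjunct1] by blast

lemma unique_line: "x \<in> pts A \<Longrightarrow> y \<in> pts A \<Longrightarrow> x \<noteq> y \<Longrightarrow> \<exists>!l. l \<in> lns A \<and> x \<in> l \<and> y \<in> l"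
  using affine_conjs[THEN conjunct2, THEN conjunct1] by simp

lemma par_lns: "par A a b \<Longrightarrow> a \<in> lns A \<and> b \<in> lns A"
  using affine_conjs[THEN conjunct2, THEN conjunct2, THEN conjunct1] by simp

lemma par_refl: "a \<in> lns A \<Longrightarrow> par A a a"
  using affine_conjs[THEN conjunct2, THEN conjunct2, THEN conjunct2, THEN conjunct1] by simp

lemma par_sym: "par A a b \<Longrightarrow> par A b a"
  using affine_conjs[THEN conjunct2, THEN conjunct2, THEN conjunct2, THEN conjunct2, THEN conjunct1]
  by simp

lemma par_trans: "par A a b \<Longrightarrow> par A b c \<Longrightarrow> par A a c"
  using affine_conjs[THEN conjunct2, THEN conjunct2, THEN conjunct2, THEN conjunct2, THEN conjunct2,
      THEN conjunct1]
  by blast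

lemma euclid: "a \<in> lns A \<Longrightarrow> q \<in> pts A \<Longrightarrow> \<exists>!m. m \<in> lns A \<and> q \<in> m \<and> par A m a"
  using affine_conjs[THEN conjunct2, THEN conjunct2, THEN conjunct2, THEN conjunct2, THEN conjunct2,
      THEN conjunct2, THEN conjunct1]
  by simp

lemma triangle_axiom:
  assumes "p \<in> pts A" "q \<in> pts A" "r \<in> pts A" "p' \<in> pts A" "q' \<in> pts A"
    "\<not> collinear A p q r" "p' \<noteq> q'"
    "a \<in> lns A" "p \<in> a" "q \<in> a"
    "b \<in> lns A" "p \<in> b" "r \<in> b"
    "c \<in> lns A" "q \<in> c" "r \<in> c"
    "a' \<in> lns A" "p' \<in> a'" "q' \<in> a'" "par A a a'"
    "b' \<in> lns A" "p' \<in> b'" "par A b b'"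
    "c' \<in> lns A" "q' \<in> c'" "par A c c'"
  shows "b' \<inter> c' \<noteq> {}"
  by (rule affine_conjs[THEN conjunct2, THEN conjunct2, THEN conjunct2, THEN conjunct2, THEN conjunct2,
        THEN conjunct2, THEN conjunct2, rule_format, of p q r p' q' a b c a' b' c'])
     (intro conjI; rule assms)

lemma lines_eq:
  "l \<in> lns A \<Longrightarrow> m \<in> lns A \<Longrightarrow> x \<in> l \<Longrightarrow> y \<in> l \<Longrightarrow> x \<in> m \<Longrightarrow> y \<in> m \<Longrightarrow> x \<noteq> y \<Longrightarrow> l = m"
  using unique_line[of x y] line_subset by blast

lemma meet_unique:
  "g \<in> lns A \<Longrightarrow> h \<in> lns A \<Longrightarrow> g \<noteq> h \<Longrightarrow> x \<in> g \<Longrightarrow> x \<in> h \<Longrightarrow> y \<in> g \<Longrightarrow> y \<in> h \<Longrightarrow> x = y"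
  using lines_eq by blast

lemma join:
  "x \<in> pts A \<Longrightarrow> y \<in> pts A \<Longrightarrow> x \<noteq> y \<Longrightarrow> join A x y \<in> lns A \<and> x \<in> join A x y \<and> y \<in> join A x y"
  unfolding join_def using theI'[OF unique_line] by blast

lemma join_unique: "l \<in> lns A \<Longrightarrow> x \<in> l \<Longrightarrow> y \<in> l \<Longrightarrow> x \<noteq> y \<Longrightarrow> join A x y = l"
  using join[of x y] line_subset lines_eq by blast

lemma join_sym: "x \<in> pts A \<Longrightarrow> y \<in> pts A \<Longrightarrow> x \<noteq> y \<Longrightarrow> join A x y = join A y x"
  using join[of x y] join_unique by metis

lemma parl: "w \<in> pts A \<Longrightarrow> l \<in> lns A \<Longrightarrow> parl A w l \<in> lns A \<and> w \<in> parl A w l \<and> par A (parl A w l) l"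
  unfolding parl_def using theI'[OF euclid] by blast

lemma parl_unique: "m \<in> lns A \<Longrightarrow> w \<in> m \<Longrightarrow> par A m l \<Longrightarrow> parl A w l = m"
proof -
  assume m: "m \<in> lns A" "w \<in> m" "par A m l"
  have "l \<in> lns A" "w \<in> pts A" using m par_lns line_subset by auto
  then have "\<exists>!m. m \<in> lns A \<and> w \<in> m \<and> par A m l" by (rule euclid)
  then show ?thesis unfolding parl_def by (rule the1_equality) (use m in simp)
qed

lemma par_meet: "par A l m \<Longrightarrow> x \<in> l \<Longrightarrow> x \<in> m \<Longrightarrow> l = m"
  by (metis par_lns par_refl parl_unique)

lemma parl_cong: "par A m l \<Longrightarrow> w \<in> pts A \<Longrightarrow> parl A w m = parl A w l"
  by (metis par_lns par_trans parl parl_unique)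

lemma parl_self: "l \<in> lns A \<Longrightarrow> w \<in> l \<Longrightarrow> parl A w l = l"
  by (simp add: par_refl parl_unique)

lemma parl_eq: "w \<in> pts A \<Longrightarrow> l \<in> lns A \<Longrightarrow> x \<in> parl A w l \<Longrightarrow> parl A x l = parl A w l"
  by (simp add: parl parl_unique)

lemma parl_parl: "w \<in> pts A \<Longrightarrow> l \<in> lns A \<Longrightarrow> x \<in> pts A \<Longrightarrow> parl A x (parl A w l) = parl A x l"
  by (simp add: parl parl_cong)

lemma join_off_line:
  assumes l: "l \<in> lns A" "x \<in> l" "y \<in> l" and xy: "x \<noteq> y" and z: "z \<in> pts A" "z \<notin> l"
  shows "y \<notin> join A z x"
proof
  assume y: "y \<in> join A z x"
  have "z \<noteq> x" using l z by auto
  then have zx: "join A z x \<in> lns A" "z \<in> join A z x" "x \<in> join A z x"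
    using join[OF z(1)] line_subset l by auto
  have "join A z x = l" by (rule lines_eq[OF zx(1) l(1) zx(3) y l(2,3) xy])
  then show False using zx z by auto
qed

lemma triangle:
  assumes "p \<in> pts A" "q \<in> pts A" "r \<in> pts A" "p' \<in> pts A" "q' \<in> pts A"
    "p \<noteq> q" "r \<notin> join A p q" "p' \<noteq> q'" "par A (join A p' q') (join A p q)"
  shows "parl A p' (join A p r) \<inter> parl A q' (join A q r) \<noteq> {}"
proof -
  have pq: "join A p q \<in> lns A" "p \<in> join A p q" "q \<in> join A p q" using join assms by auto
  have rp: "r \<noteq> p" "r \<noteq> q" using pq assms by auto
  have nc: "\<not> collinear A p q r"
    unfolding collinear_def using assms pq join_unique by metis
  have pr: "join A p r \<in> lns A" "p \<in> join A p r" "r \<in> join A p r" using join assms rp by auto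
  have qr: "join A q r \<in> lns A" "q \<in> join A q r" "r \<in> join A q r" using join assms rp by auto
  have pq': "join A p' q' \<in> lns A" "p' \<in> join A p' q'" "q' \<in> join A p' q'" using join assms by auto
  have b': "parl A p' (join A p r) \<in> lns A" "p' \<in> parl A p' (join A p r)"
    "par A (join A p r) (parl A p' (join A p r))"
    using parl[of p' "join A p r"] assms pr par_sym by auto
  have c': "parl A q' (join A q r) \<in> lns A" "q' \<in> parl A q' (join A q r)"
    "par A (join A q r) (parl A q' (join A q r))"
    using parl[of q' "join A q r"] assms qr par_sym by auto
  have a': "par A (join A p q) (join A p' q')" using par_sym[OF assms(9)] .
  show ?thesis
    by (rule triangle_axiom[of p q r p' q' "join A p q" "join A p r" "join A q r" "join A p' q'"])
       (rule assms nc pq pr qr pq' a' b' c')+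
qed

definition crossing :: "'p set \<Rightarrow> 'p set \<Rightarrow> 'p \<Rightarrow> bool" where
  "crossing g h C \<longleftrightarrow> g \<in> lns A \<and> h \<in> lns A \<and> g \<noteq> h \<and> C \<in> g \<and> C \<in> h"

lemma crossing_sym: "crossing g h C \<Longrightarrow> crossing h g C"
  unfolding crossing_def by auto

lemma crossing_centre: "crossing g h C \<Longrightarrow> C \<in> pts A"
  unfolding crossing_def using line_subset by auto

lemma plane_pts: "plane A g h \<subseteq> pts A"
  unfolding plane_def by auto

lemma planeI: "w \<in> pts A \<Longrightarrow> u \<in> parl A w h \<Longrightarrow> u \<in> g \<Longrightarrow> w \<in> plane A g h"
  unfolding plane_def by auto

lemma planeE: "w \<in> plane A g h \<Longrightarrow> (\<And>u. w \<in> pts A \<Longrightarrow> u \<in> parl A w h \<Longrightarrow> u \<in> g \<Longrightarrow> thesis) \<Longrightarrow> thesis"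
  unfolding plane_def by auto

lemma line1_in_plane: "crossing g h C \<Longrightarrow> g \<subseteq> plane A g h"
  unfolding crossing_def using line_subset parl by (blast intro: planeI)

lemma line2_in_plane: "crossing g h C \<Longrightarrow> h \<subseteq> plane A g h"
proof
  fix w assume c: "crossing g h C" and w: "w \<in> h"
  have "parl A w h = h" using c w parl_self unfolding crossing_def by auto
  then show "w \<in> plane A g h" using c w line_subset unfolding crossing_def by (auto intro: planeI)
qed

lemma plane_foot:
  assumes c: "crossing g h C" and w: "w \<in> plane A g h" and wg: "w \<notin> g"
  obtains u where "u \<in> g" "u \<noteq> w" "join A w u = parl A w h" "w \<notin> h \<Longrightarrow> u \<noteq> C"
proof -
  have g: "g \<in> lns A" and h: "h \<in> lns A" "C \<in> h" using c unfolding crossing_def by auto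
  obtain u where wp: "w \<in> pts A" and u: "u \<in> parl A w h" "u \<in> g" using w by (rule planeE)
  have plw: "parl A w h \<in> lns A" "w \<in> parl A w h" "par A (parl A w h) h" using parl wp h by auto
  have uw: "u \<noteq> w" using u wg by auto
  moreover have "join A w u = parl A w h" using join_unique plw u uw by auto
  moreover have "u \<noteq> C" if "w \<notin> h"
    using par_meet[OF plw(3) _ h(2)] plw(2) u(1) that by auto
  ultimately show thesis using that u(2) by blast
qed

text \<open>The defining condition is symmetric: the parallel to g through a point of the
  plane meets h (triangle axiom for w, C and the foot of w).\<close>

lemma plane_parl_meets:
  assumes c: "crossing g h C" and w: "w \<in> plane A g h"
  shows "parl A w g \<inter> h \<noteq> {}"
proof -
  have g: "g \<in> lns A" "C \<in> g" and h: "h \<in> lns A" "C \<in> h"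
    using c unfolding crossing_def by auto
  have C: "C \<in> pts A" using c crossing_centre by auto
  have wp: "w \<in> pts A" using w plane_pts by auto
  consider "w \<in> g" | "w \<in> h" | "w \<notin> g" "w \<notin> h" by blast
  then show ?thesis
  proof cases
    case 1
    then show ?thesis using parl_self g h by auto
  next
    case 2
    then show ?thesis using parl[OF wp g(1)] by auto
  next
    case 3
    obtain u where u: "u \<in> g" "u \<noteq> w" "join A w u = parl A w h" "u \<noteq> C"
      using plane_foot[OF c w 3(1)] 3(2) by metis
    have up: "u \<in> pts A" using u g line_subset by auto
    have wC: "w \<noteq> C" using 3 g by auto
    have u_off: "u \<notin> join A w C" using join_off_line[OF g(1,2) u(1) u(4)[symmetric] wp 3(1)] .
    have "par A (join A C w) (join A w C)" using join_sym[OF C wp] wC par_refl join[OF C wp] by auto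
    then have "parl A C (join A w u) \<inter> parl A w (join A C u) \<noteq> {}"
      using triangle[OF wp C up C wp wC u_off] wC by auto
    moreover have "parl A C (join A w u) = h" using u(3) parl_parl[OF wp h(1) C] parl_self h by auto
    moreover have "join A C u = g" using join_unique g u by auto
    ultimately show ?thesis by auto
  qed
qed

lemma plane_sym: "crossing g h C \<Longrightarrow> plane A g h = plane A h g"
proof -
  assume c: "crossing g h C"
  have "plane A g h \<subseteq> plane A h g" using plane_parl_meets[OF c] plane_pts unfolding plane_def by auto
  moreover have "plane A h g \<subseteq> plane A g h" using plane_parl_meets[OF crossing_sym[OF c]] plane_pts unfolding plane_def by auto
  ultimately show ?thesis by auto
qed

lemma parl_lines_meet:
  assumes c: "crossing g h C" and u: "u \<in> g" and v: "v \<in> h"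
  shows "parl A u h \<inter> parl A v g \<noteq> {}"
proof -
  have g: "g \<in> lns A" "C \<in> g" and h: "h \<in> lns A" "C \<in> h" and gh: "g \<noteq> h"
    using c unfolding crossing_def by auto
  have C: "C \<in> pts A" using c crossing_centre by auto
  have up: "u \<in> pts A" and vp: "v \<in> pts A" using u v g h line_subset by auto
  consider "u = C" | "v = C" | "u \<noteq> C" "v \<noteq> C" by blast
  then show ?thesis
  proof cases
    case 1
    then show ?thesis using parl_self h v parl[OF vp g(1)] by auto
  next
    case 2
    then show ?thesis using parl_self g u parl[OF up h(1)] by auto
  next
    case 3
    have vg: "v \<notin> g" using meet_unique[OF g(1) h(1) gh] v g h 3(2) by metis
    have uv: "u \<noteq> v" using u vg by auto
    have C_off: "C \<notin> join A v u" using join_off_line[OF g(1) u g(2) 3(1) vp vg] .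
    have "par A (join A u v) (join A v u)" using join_sym[OF up vp] uv par_refl join[OF up vp] by auto
    then have "parl A u (join A v C) \<inter> parl A v (join A u C) \<noteq> {}"
      using triangle[OF vp up C up vp uv[symmetric] C_off uv] by auto
    moreover have "join A v C = h" "join A u C = g" using join_unique h v g u 3 by auto
    ultimately show ?thesis by auto
  qed
qed

lemma crossing_parl:
  assumes c: "crossing g h C" and O': "O' \<in> pts A"
  shows "crossing (parl A O' g) (parl A O' h) O'"
proof -
  have g: "g \<in> lns A" "C \<in> g" and h: "h \<in> lns A" "C \<in> h" and gh: "g \<noteq> h"
    using c unfolding crossing_def by auto
  have "parl A O' g \<noteq> parl A O' h"
  proof
    assume e: "parl A O' g = parl A O' h"
    have "par A g h" using parl[OF O' g(1)] parl[OF O' h(1)] e par_sym par_trans by metis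
    then show False using par_meet g h gh by auto
  qed
  then show ?thesis unfolding crossing_def using parl[OF O' g(1)] parl[OF O' h(1)] by auto
qed

lemma plane_translate_subset:
  assumes c: "crossing g h C" and O': "O' \<in> plane A g h"
  shows "plane A g h \<subseteq> plane A (parl A O' g) (parl A O' h)"
proof
  have g: "g \<in> lns A" "C \<in> g" and h: "h \<in> lns A" "C \<in> h"
    using c unfolding crossing_def by auto
  have O'p: "O' \<in> pts A" using O' plane_pts by auto
  obtain v where v: "v \<in> parl A O' g" "v \<in> h" using plane_parl_meets[OF c O'] by auto
  have vp: "v \<in> pts A" using v h line_subset by auto
  fix w assume w: "w \<in> plane A g h"
  obtain u where wp: "w \<in> pts A" and u: "u \<in> parl A w h" "u \<in> g" using w by (rule planeE)
  have up: "u \<in> pts A" using u g line_subset by auto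
  have e1: "parl A w (parl A O' h) = parl A u h" using parl_parl[OF O'p h(1) wp] parl_eq[OF wp h(1) u(1)] by auto
  have e2: "parl A O' g = parl A v g" using parl_eq[OF O'p g(1) v(1)] by auto
  have "parl A w (parl A O' h) \<inter> parl A O' g \<noteq> {}" using parl_lines_meet[OF c u(2) v(2)] e1 e2 by auto
  then show "w \<in> plane A (parl A O' g) (parl A O' h)" using wp unfolding plane_def by auto
qed

lemma plane_translate:
  assumes c: "crossing g h C" and O': "O' \<in> plane A g h"
  shows "plane A g h = plane A (parl A O' g) (parl A O' h)"
proof
  show "plane A g h \<subseteq> plane A (parl A O' g) (parl A O' h)" using plane_translate_subset[OF c O'] .
  have g: "g \<in> lns A" "C \<in> g" and h: "h \<in> lns A" "C \<in> h"
    using c unfolding crossing_def by auto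
  have O: "C \<in> pts A" using c crossing_centre by auto
  have O'p: "O' \<in> pts A" using O' plane_pts by auto
  have c': "crossing (parl A O' g) (parl A O' h) O'" using crossing_parl[OF c O'p] .
  have e1: "parl A C (parl A O' g) = g" using parl_parl[OF O'p g(1) O] parl_self g by auto
  have e2: "parl A C (parl A O' h) = h" using parl_parl[OF O'p h(1) O] parl_self h by auto
  have "parl A O' g \<inter> h \<noteq> {}" using plane_parl_meets[OF c O'] .
  then have "C \<in> plane A (parl A O' g) (parl A O' h)" using e2 O unfolding plane_def by auto
  from plane_translate_subset[OF c' this] e1 e2
  show "plane A (parl A O' g) (parl A O' h) \<subseteq> plane A g h" by simp
qed

text \<open>Closure under joins, first through the centre and then in general (using the
  translation invariance).  For a line CW with W off g and h, the parallels to h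
  through its points all meet g, by the triangle axiom for W, C and the foot of W.\<close>

lemma plane_join_centre:
  assumes c: "crossing g h C" and W: "W \<in> plane A g h" and WC: "W \<noteq> C"
  shows "join A C W \<subseteq> plane A g h"
proof -
  have g: "g \<in> lns A" "C \<in> g" and h: "h \<in> lns A" "C \<in> h"
    using c unfolding crossing_def by auto
  have C: "C \<in> pts A" using c crossing_centre by auto
  have Wp: "W \<in> pts A" using W plane_pts by auto
  have CW: "join A C W \<in> lns A" "C \<in> join A C W" "W \<in> join A C W" using join[OF C Wp] WC by auto
  consider "W \<in> g" | "W \<in> h" | "W \<notin> g" "W \<notin> h" by blast
  then show ?thesis
  proof cases
    case 1
    then show ?thesis using join_unique g WC line1_in_plane[OF c] by auto
  next
    case 2
    then show ?thesis using join_unique h WC line2_in_plane[OF c] by auto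
  next
    case 3
    obtain u where u: "u \<in> g" "u \<noteq> W" "join A W u = parl A W h" "u \<noteq> C"
      using plane_foot[OF c W 3(1)] 3(2) by metis
    have up: "u \<in> pts A" using u g line_subset by auto
    have u_off: "u \<notin> join A W C" using join_off_line[OF g(1,2) u(1) u(4)[symmetric] Wp 3(1)] .
    show ?thesis
    proof
      fix x assume x: "x \<in> join A C W"
      have xp: "x \<in> pts A" using x CW line_subset by auto
      show "x \<in> plane A g h"
      proof (cases "x = C")
        case True
        then show ?thesis using line1_in_plane[OF c] g by auto
      next
        case xC: False
        have "join A x C = join A C W" "join A W C = join A C W"
          using join_unique[OF CW(1) x CW(2) xC] join_sym[OF Wp C] WC by auto
        then have "par A (join A x C) (join A W C)" using par_refl CW by auto
        then have "parl A x (join A W u) \<inter> parl A C (join A C u) \<noteq> {}"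
          using triangle[OF Wp C up xp C WC u_off xC] by auto
        moreover have "parl A x (join A W u) = parl A x h" using u(3) parl_parl[OF Wp h(1) xp] by auto
        moreover have "parl A C (join A C u) = g" using join_unique g u parl_self by auto
        ultimately show ?thesis using xp unfolding plane_def by auto
      qed
    qed
  qed
qed

lemma plane_join:
  assumes c: "crossing g h C" and x: "x \<in> plane A g h" and y: "y \<in> plane A g h" and xy: "x \<noteq> y"
  shows "join A x y \<subseteq> plane A g h"
proof -
  have xp: "x \<in> pts A" using x plane_pts by auto
  have e: "plane A g h = plane A (parl A x g) (parl A x h)" using plane_translate[OF c x] .
  have c': "crossing (parl A x g) (parl A x h) x" using crossing_parl[OF c xp] .
  show ?thesis using plane_join_centre[OF c', of y] y xy e by auto
qed

lemma plane_parl_second: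
  assumes c: "crossing g h C" and w: "w \<in> plane A g h"
  shows "parl A w h \<subseteq> plane A g h"
proof
  have h: "h \<in> lns A" using c unfolding crossing_def by auto
  obtain u where wp: "w \<in> pts A" and u: "u \<in> parl A w h" "u \<in> g" using w by (rule planeE)
  fix x assume x: "x \<in> parl A w h"
  have xp: "x \<in> pts A" using x parl[OF wp h] line_subset by auto
  have "parl A x h = parl A w h" using parl_eq[OF wp h x] .
  then show "x \<in> plane A g h" using xp u by (auto intro: planeI)
qed

text \<open>For a line l of the plane through the centre, other than g and h, the parallel to l
  through a point w off g meets g (triangle axiom for a point p of l, its foot on g
  and C, against w and its foot).\<close>

lemma plane_parl_meets_first:
  assumes c: "crossing g h C" and l: "l \<in> lns A" "C \<in> l" and lP: "l \<subseteq> plane A g h"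
    and lg: "l \<noteq> g" and lh: "l \<noteq> h" and w: "w \<in> plane A g h" and wg: "w \<notin> g"
  shows "parl A w l \<inter> g \<noteq> {}"
proof -
  have g: "g \<in> lns A" "C \<in> g" and h: "h \<in> lns A" "C \<in> h"
    using c unfolding crossing_def by auto
  have C: "C \<in> pts A" using c crossing_centre by auto
  have wp: "w \<in> pts A" using w plane_pts by auto
  obtain p where p: "p \<in> l" "p \<noteq> C" using line_two_points[OF l(1)] by metis
  have pp: "p \<in> pts A" and pP: "p \<in> plane A g h" using p l lP line_subset by auto
  have pg: "p \<notin> g" and ph: "p \<notin> h"
    using meet_unique[OF l(1) g(1) lg] meet_unique[OF l(1) h(1) lh] p l g h by metis+
  obtain q where q: "q \<in> g" "q \<noteq> p" "join A p q = parl A p h" "q \<noteq> C"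
    using plane_foot[OF c pP pg] ph by metis
  obtain u where u: "u \<in> g" "u \<noteq> w" "join A w u = parl A w h"
    using plane_foot[OF c w wg] by metis
  have qp: "q \<in> pts A" and up: "u \<in> pts A" using q u g line_subset by auto
  have C_off: "C \<notin> join A p q" using join_off_line[OF g(1) q(1) g(2) q(4) pp pg] .
  have "par A (join A w u) (join A p q)"
    using q(3) u(3) parl[OF wp h(1)] parl[OF pp h(1)] par_sym par_trans by metis
  then have "parl A w (join A p C) \<inter> parl A u (join A q C) \<noteq> {}"
    using triangle[OF pp qp C wp up q(2)[symmetric] C_off u(2)[symmetric]] by auto
  moreover have "join A p C = l" "join A q C = g" using join_unique l p g q by auto
  moreover have "parl A u g = g" using parl_self g u by auto
  ultimately show ?thesis by auto
qed

lemma plane_parl_centre: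
  assumes c: "crossing g h C" and l: "l \<in> lns A" "C \<in> l" and lP: "l \<subseteq> plane A g h"
    and w: "w \<in> plane A g h"
  shows "parl A w l \<subseteq> plane A g h"
proof -
  have g: "g \<in> lns A" "C \<in> g" and h: "h \<in> lns A" "C \<in> h" and gh: "g \<noteq> h"
    using c unfolding crossing_def by auto
  have wp: "w \<in> pts A" using w plane_pts by auto
  have plw: "parl A w l \<in> lns A" "w \<in> parl A w l" using parl wp l by auto
  have sym: "plane A h g = plane A g h" using plane_sym[OF c] by auto
  have via_meet: "parl A w l \<subseteq> plane A g h"
    if z: "z \<in> parl A w l" "z \<in> plane A g h" "z \<noteq> w" for z
    using plane_join[OF c w z(2) z(3)[symmetric]] join_unique[OF plw(1) plw(2) z(1) z(3)[symmetric]]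
    by auto
  consider "l = h" | "l = g" | "l \<noteq> g" "l \<noteq> h" "w \<notin> g" | "l \<noteq> g" "l \<noteq> h" "w \<in> g" "w \<in> h"
    | "l \<noteq> g" "l \<noteq> h" "w \<in> g" "w \<notin> h"
    by blast
  then show ?thesis
  proof cases
    case 1
    then show ?thesis using plane_parl_second[OF c w] by auto
  next
    case 2
    then show ?thesis using plane_parl_second[OF crossing_sym[OF c]] w sym by auto
  next
    case 3
    then obtain z where "z \<in> parl A w l" "z \<in> g"
      using plane_parl_meets_first[OF c l lP 3(1,2) w 3(3)] by auto
    then show ?thesis using via_meet line1_in_plane[OF c] 3 by auto
  next
    case 4
    then have "w = C" using meet_unique[OF g(1) h(1) gh] g h by metis
    then show ?thesis using parl_self l lP by auto
  next
    case 5
    then obtain z where "z \<in> parl A w l" "z \<in> h"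
      using plane_parl_meets_first[OF crossing_sym[OF c] l _ 5(2) 5(1) _ 5(4)] lP w sym by auto
    then show ?thesis using via_meet line2_in_plane[OF c] 5 by auto
  qed
qed

lemma plane_parl:
  assumes c: "crossing g h C" and l: "l \<in> lns A" and lP: "l \<subseteq> plane A g h" and w: "w \<in> plane A g h"
  shows "parl A w l \<subseteq> plane A g h"
proof -
  obtain x where x: "x \<in> l" using line_two_points[OF l] by metis
  have xP: "x \<in> plane A g h" using x lP by auto
  have xp: "x \<in> pts A" using xP plane_pts by auto
  have e: "plane A g h = plane A (parl A x g) (parl A x h)" using plane_translate[OF c xP] .
  have c': "crossing (parl A x g) (parl A x h) x" using crossing_parl[OF c xp] .
  show ?thesis using plane_parl_centre[OF c' l x] lP w e by auto
qed

text \<open>A spanning line may be replaced by any other line m of the plane through the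
  centre: first h lies in the plane spanned by g and m (triangle axiom for a point y
  of m, its foot on g and C), and then the two planes contain each other.\<close>

lemma plane_exchange_second:
  assumes c: "crossing g h C" and m: "m \<in> lns A" "C \<in> m" and mP: "m \<subseteq> plane A g h"
    and mg: "m \<noteq> g" and mh: "m \<noteq> h"
  shows "h \<subseteq> plane A g m"
proof
  have g: "g \<in> lns A" "C \<in> g" and h: "h \<in> lns A" "C \<in> h"
    using c unfolding crossing_def by auto
  have C: "C \<in> pts A" using c crossing_centre by auto
  have cm: "crossing g m C" using g m mg unfolding crossing_def by auto
  obtain y where y: "y \<in> m" "y \<noteq> C" using line_two_points[OF m(1)] by metis
  have yp: "y \<in> pts A" and yP: "y \<in> plane A g h" using y m mP line_subset by auto
  have yg: "y \<notin> g" and yh: "y \<notin> h"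
    using meet_unique[OF m(1) g(1) mg] meet_unique[OF m(1) h(1) mh] y m g h by metis+
  obtain u where u: "u \<in> g" "u \<noteq> y" "join A y u = parl A y h" "u \<noteq> C"
    using plane_foot[OF c yP yg] yh by metis
  have up: "u \<in> pts A" using u g line_subset by auto
  have C_off: "C \<notin> join A y u" using join_off_line[OF g(1) u(1) g(2) u(4) yp yg] .
  fix x assume x: "x \<in> h"
  have xp: "x \<in> pts A" using x h line_subset by auto
  show "x \<in> plane A g m"
  proof (cases "x = C")
    case True
    then show ?thesis using line1_in_plane[OF cm] g by auto
  next
    case xC: False
    have "join A x C = h" using join_unique h x xC by auto
    then have "par A (join A x C) (join A y u)" using u(3) par_sym parl[OF yp h(1)] by auto
    then have "parl A x (join A y C) \<inter> parl A C (join A u C) \<noteq> {}"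
      using triangle[OF yp up C xp C u(2)[symmetric] C_off xC] by auto
    moreover have "join A y C = m" "join A u C = g" using join_unique m y g u by auto
    moreover have "parl A C g = g" using parl_self g by auto
    ultimately show ?thesis using xp unfolding plane_def by auto
  qed
qed

lemma plane_exchange:
  assumes c: "crossing g h C" and m: "m \<in> lns A" "C \<in> m" and mP: "m \<subseteq> plane A g h" and mg: "m \<noteq> g"
  shows "plane A g m = plane A g h"
proof
  have g: "g \<in> lns A" "C \<in> g" and h: "h \<in> lns A" "C \<in> h"
    using c unfolding crossing_def by auto
  have cm: "crossing g m C" using g m mg unfolding crossing_def by auto
  show "plane A g m \<subseteq> plane A g h"
  proof
    fix w assume w: "w \<in> plane A g m"
    obtain u where wp: "w \<in> pts A" and u: "u \<in> parl A w m" "u \<in> g" using w by (rule planeE)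
    have "parl A u m = parl A w m" using parl_eq[OF wp m(1) u(1)] .
    moreover have "parl A u m \<subseteq> plane A g h" using plane_parl[OF c m(1) mP] u line1_in_plane[OF c] by auto
    ultimately show "w \<in> plane A g h" using parl[OF wp m(1)] by auto
  qed
  have hP: "h \<subseteq> plane A g m"
    using line2_in_plane[OF cm] plane_exchange_second[OF c m mP mg] by (cases "m = h") auto
  show "plane A g h \<subseteq> plane A g m"
  proof
    fix w assume w: "w \<in> plane A g h"
    obtain u where wp: "w \<in> pts A" and u: "u \<in> parl A w h" "u \<in> g" using w by (rule planeE)
    have "parl A u h = parl A w h" using parl_eq[OF wp h(1) u(1)] .
    moreover have "parl A u h \<subseteq> plane A g m" using plane_parl[OF cm h(1) hP] u line1_in_plane[OF cm] by auto
    ultimately show "w \<in> plane A g m" using parl[OF wp h(1)] by auto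
  qed
qed

text \<open>Any two crossing lines of the plane span it: translate the spanning lines to the
  new centre and exchange them one at a time.\<close>

lemma plane_spanned_by_crossing:
  assumes c: "crossing g h C" and c': "crossing m n W"
    and mP: "m \<subseteq> plane A g h" and nP: "n \<subseteq> plane A g h"
  shows "plane A m n = plane A g h"
proof -
  have m: "m \<in> lns A" "W \<in> m" and n: "n \<in> lns A" "W \<in> n" and mn: "m \<noteq> n"
    using c' unfolding crossing_def by auto
  have WP: "W \<in> plane A g h" using mP m by auto
  define g' where "g' = parl A W g"
  define h' where "h' = parl A W h"
  have e: "plane A g h = plane A g' h'" using plane_translate[OF c WP] g'_def h'_def by auto
  have c'': "crossing g' h' W" using crossing_parl[OF c] WP plane_pts g'_def h'_def by auto
  have g': "g' \<in> lns A" "W \<in> g'" using c'' unfolding crossing_def by auto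
  show ?thesis
  proof (cases "m = g'")
    case True
    then show ?thesis using plane_exchange[OF c'' n] nP e mn by auto
  next
    case False
    have e1: "plane A g' m = plane A g' h'" using plane_exchange[OF c'' m] mP e False by auto
    have cgm: "crossing g' m W" using g' m False unfolding crossing_def by auto
    have e2: "plane A m g' = plane A g' m" using plane_sym[OF cgm] by auto
    have "plane A m n = plane A m g'"
      using plane_exchange[OF crossing_sym[OF cgm] n] nP e e1 e2 mn by auto
    then show ?thesis using e e1 e2 by auto
  qed
qed

text \<open>The plane is planar: two disjoint lines of the plane are parallel.  Otherwise
  the parallel n' to n through a point w of m crosses m, the plane spanned by m and n'
  contains n, and the parallel to n' through a point of n (which is n) meets m.\<close>

lemma plane_disjoint_lines_par:
  assumes c: "crossing g h C" and m: "m \<in> lns A" and n: "n \<in> lns A"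
    and mP: "m \<subseteq> plane A g h" and nP: "n \<subseteq> plane A g h" and mn: "m \<inter> n = {}"
  shows "par A m n"
proof -
  obtain w where w: "w \<in> m" using line_two_points[OF m] by metis
  have wP: "w \<in> plane A g h" using w mP by auto
  have wp: "w \<in> pts A" using wP plane_pts by auto
  define n' where "n' = parl A w n"
  have n': "n' \<in> lns A" "w \<in> n'" "par A n' n" using parl[OF wp n] n'_def by auto
  show ?thesis
  proof (cases "n' = m")
    case True
    then show ?thesis using n' by auto
  next
    case False
    have "crossing m n' w" using m n' w False unfolding crossing_def by auto
    moreover have "n' \<subseteq> plane A g h" using plane_parl[OF c n nP wP] n'_def by auto
    ultimately have e: "plane A m n' = plane A g h" using plane_spanned_by_crossing[OF c _ mP] by auto
    obtain x where x: "x \<in> n" using line_two_points[OF n] by metis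
    have xp: "x \<in> pts A" using x n line_subset by auto
    have "parl A x n' \<inter> m \<noteq> {}" using e x nP unfolding plane_def by auto
    moreover have "parl A x n' = n" using parl_parl[OF wp n xp] n'_def parl_self n x by auto
    ultimately show ?thesis using mn by auto
  qed
qed

text \<open>Dimension at least 3 yields a pair of skew lines: for a triangle pqr inside a
  subspace S and a point s outside S, the line sr can neither meet pq (it would
  lie in S) nor be parallel to it (it would lie in S as well).\<close>

lemma skew_lines:
  assumes "dim_ge_3 A"
  obtains m n where "m \<in> lns A" "n \<in> lns A" "m \<inter> n = {}" "\<not> par A m n"
proof -
  obtain p q r s where pqrs: "p \<in> pts A" "q \<in> pts A" "r \<in> pts A" "s \<in> pts A"
    "\<not> collinear A p q r" "s \<notin> span A {p, q, r}"
    using assms unfolding dim_ge_3_def by blast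
  obtain S where S: "subspace A S" "{p, q, r} \<subseteq> S" "s \<notin> S"
    using pqrs(6) unfolding span_def by blast
  have join_in_S: "\<And>l x y. l \<in> lns A \<Longrightarrow> x \<in> l \<Longrightarrow> y \<in> l \<Longrightarrow> x \<in> S \<Longrightarrow> y \<in> S \<Longrightarrow> x \<noteq> y \<Longrightarrow> l \<subseteq> S"
    and par_in_S: "\<And>l m. l \<subseteq> S \<Longrightarrow> par A l m \<Longrightarrow> m \<inter> S \<noteq> {} \<Longrightarrow> m \<subseteq> S"
    using S(1) unfolding subspace_def by blast+
  have pq: "p \<noteq> q"
  proof
    assume "p = q"
    moreover have "s \<noteq> p" using S by auto
    ultimately show False
      using pqrs join[of p s] join[of p r] unfolding collinear_def by (cases "r = p") metis+
  qed
  have lpq: "join A p q \<in> lns A" "p \<in> join A p q" "q \<in> join A p q" using join pqrs(1,2) pq by auto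
  have r_off: "r \<notin> join A p q" using pqrs(5) lpq unfolding collinear_def by auto
  have pq_in_S: "join A p q \<subseteq> S" using join_in_S[OF lpq] S pq by auto
  have sr: "s \<noteq> r" using S by auto
  have lsr: "join A s r \<in> lns A" "s \<in> join A s r" "r \<in> join A s r" using join pqrs sr by auto
  have "join A s r \<inter> join A p q = {}"
  proof (rule ccontr)
    assume "join A s r \<inter> join A p q \<noteq> {}"
    then obtain u where u: "u \<in> join A s r" "u \<in> join A p q" by auto
    have "u \<noteq> r" using u r_off by auto
    then have "join A s r \<subseteq> S" using join_in_S[OF lsr(1) u(1) lsr(3)] u pq_in_S S by auto
    then show False using lsr S by auto
  qed
  moreover have "\<not> par A (join A s r) (join A p q)"
  proof
    assume "par A (join A s r) (join A p q)"
    then have "join A s r \<subseteq> S" using par_in_S[OF pq_in_S par_sym] lsr S by auto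
    then show False using lsr S by auto
  qed
  ultimately show thesis using that lsr(1) lpq(1) by blast
qed

lemma no_point_on_all_lines:
  assumes "dim_ge_3 A"
  shows "\<not> (\<forall>l\<in>lns A. P \<in> l)"
  using skew_lines[OF assms] by blast

lemma plane_proper:
  assumes "dim_ge_3 A" and c: "crossing g h C"
  shows "\<exists>W\<in>pts A. W \<notin> plane A g h"
proof (rule ccontr)
  assume "\<not> (\<exists>W\<in>pts A. W \<notin> plane A g h)"
  then have all: "pts A \<subseteq> plane A g h" by auto
  obtain m n where "m \<in> lns A" "n \<in> lns A" "m \<inter> n = {}" "\<not> par A m n"
    using skew_lines[OF assms(1)] .
  then show False using plane_disjoint_lines_par[OF c] all line_subset by blast
qed

text \<open>In dimension at least 3 some line misses a given plane: the parallel to a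
  spanning line through a point outside the plane.\<close>

lemma line_missing_plane:
  assumes "dim_ge_3 A" and c: "crossing g h C"
  obtains k where "k \<in> lns A" "k \<inter> plane A g h = {}"
proof -
  obtain W where W: "W \<in> pts A" "W \<notin> plane A g h" using plane_proper[OF assms] by blast
  have g: "g \<in> lns A" using c unfolding crossing_def by auto
  have k: "parl A W g \<in> lns A" "W \<in> parl A W g" using parl[OF W(1) g] by auto
  have "parl A W g \<inter> plane A g h = {}"
  proof (rule ccontr)
    assume "parl A W g \<inter> plane A g h \<noteq> {}"
    then obtain V where V: "V \<in> parl A W g" "V \<in> plane A g h" by auto
    have "parl A W g = parl A V g" using parl_eq[OF W(1) g V(1)] by simp
    then have "parl A W g \<subseteq> plane A g h"
      using plane_parl[OF c g line1_in_plane[OF c] V(2)] by simp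
    then show False using k W by auto
  qed
  then show thesis using that k(1) by blast
qed

text \<open>A family of pairwise intersecting lines without a common point lies in a plane:
  two of its lines a, b cross at X, a third line c misses X and hence meets a and b
  in two distinct points, and every further line meets a, b, c in at least two
  distinct points of the plane spanned by a and b.\<close>

lemma pairwise_meeting_lines_coplanar:
  assumes F: "F \<subseteq> lns A" and meet: "\<And>a b. a \<in> F \<Longrightarrow> b \<in> F \<Longrightarrow> a \<inter> b \<noteq> {}"
    and not_conc: "\<not> (\<exists>P. \<forall>x\<in>F. P \<in> x)"
  obtains g h C where "crossing g h C" "\<And>x. x \<in> F \<Longrightarrow> x \<subseteq> plane A g h"
proof -
  obtain a where a: "a \<in> F" using not_conc by blast
  obtain X0 where X0: "X0 \<in> a" using line_two_points a F by blast
  obtain b where b: "b \<in> F" "X0 \<notin> b" using not_conc by blast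
  have ab: "a \<noteq> b" using X0 b by auto
  obtain X where X: "X \<in> a" "X \<in> b" using meet[OF a b(1)] by blast
  obtain c where c: "c \<in> F" "X \<notin> c" using not_conc by blast
  obtain Y where Y: "Y \<in> a" "Y \<in> c" using meet[OF a c(1)] by blast
  obtain Z where Z: "Z \<in> b" "Z \<in> c" using meet[OF b(1) c(1)] by blast
  have la: "a \<in> lns A" and lb: "b \<in> lns A" and lc: "c \<in> lns A" using F a b c by auto
  have cr: "crossing a b X" unfolding crossing_def using la lb ab X by auto
  have aP: "a \<subseteq> plane A a b" and bP: "b \<subseteq> plane A a b"
    using line1_in_plane[OF cr] line2_in_plane[OF cr] .
  have YX: "Y \<noteq> X" using Y c by auto
  have YZ: "Y \<noteq> Z" using lines_eq[OF la lb] X Y Z YX ab by auto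
  have cP: "c \<subseteq> plane A a b"
    using plane_join[OF cr, of Y Z] join_unique[OF lc Y(2) Z(2) YZ] YZ Y Z aP bP by auto
  have "x \<subseteq> plane A a b" if x: "x \<in> F" for x
  proof -
    have lx: "x \<in> lns A" using F x by auto
    obtain V1 where V1: "V1 \<in> x" "V1 \<in> a" using meet[OF x a] by blast
    obtain V2 where V2: "V2 \<in> x" "V2 \<in> b" using meet[OF x b(1)] by blast
    obtain V3 where V3: "V3 \<in> x" "V3 \<in> c" using meet[OF x c(1)] by blast
    show "x \<subseteq> plane A a b"
    proof (cases "V1 = V2")
      case False
      then show ?thesis
        using plane_join[OF cr, of V1 V2] join_unique[OF lx V1(1) V2(1)] V1 V2 aP bP by auto
    next
      case True
      then have "V1 = X" using meet_unique[OF la lb ab] V1 V2 X by auto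
      then have V13: "V1 \<noteq> V3" using V3 c by auto
      then show ?thesis
        using plane_join[OF cr, of V1 V3] join_unique[OF lx V1(1) V3(1)] V1 V3 aP cP by auto
    qed
  qed
  then show thesis using that cr by blast
qed

lemma line_meets_star:
  assumes l: "l \<in> lns A" and Q: "Q \<in> pts A"
  shows "\<exists>x\<in>star A Q. l \<inter> x \<noteq> {}"
proof (cases "Q \<in> l")
  case True
  then show ?thesis using l unfolding star_def by auto
next
  case False
  obtain y where y: "y \<in> l" using line_two_points[OF l] by blast
  have "y \<in> pts A" "Q \<noteq> y" using y l line_subset False by auto
  then show ?thesis using join[OF Q] y unfolding star_def by blast
qed

lemma point_off_line:
  assumes "l \<in> lns A" "m \<in> lns A" "m \<noteq> l"
  shows "\<exists>T\<in>pts A. T \<notin> l"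
proof -
  obtain x y where "x \<in> m" "y \<in> m" "x \<noteq> y" using line_two_points[OF assms(2)] by blast
  then show ?thesis using lines_eq[OF assms(1,2)] assms(3) line_subset[OF assms(2)] by blast
qed

end

locale adjacency_preserving =
  src: affine_geom A + tgt: affine_geom A'
  for A :: "('p,'x) affine_structure_scheme" and A' :: "('q,'y) affine_structure_scheme" +
  fixes \<phi> :: "'p set \<Rightarrow> 'q set"
  assumes dim: "dim_ge_3 A'"
    and bij: "bij_betw \<phi> (lns A) (lns A')"
    and adj: "\<And>a b. a \<in> lns A \<Longrightarrow> b \<in> lns A \<Longrightarrow> a \<inter> b \<noteq> {} \<Longrightarrow> \<phi> a \<inter> \<phi> b \<noteq> {}"
begin

lemma phi_line: "l \<in> lns A \<Longrightarrow> \<phi> l \<in> lns A'"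
  using bij unfolding bij_betw_def by auto

lemma phi_eq: "l \<in> lns A \<Longrightarrow> m \<in> lns A \<Longrightarrow> \<phi> l = \<phi> m \<Longrightarrow> l = m"
  using bij unfolding bij_betw_def inj_on_def by auto

lemma phi_onto: "l' \<in> lns A' \<Longrightarrow> \<exists>l\<in>lns A. l' = \<phi> l"
  using bij unfolding bij_betw_def by auto

text \<open>The source has at least two lines, since the target has skew lines; hence no
  line of the source contains all points.\<close>

lemma src_point_off_line:
  assumes l: "l \<in> lns A"
  shows "\<exists>T\<in>pts A. T \<notin> l"
proof -
  obtain m' n' where mn': "m' \<in> lns A'" "n' \<in> lns A'" "m' \<inter> n' = {}"
    using tgt.skew_lines[OF dim] by blast
  have "m' \<noteq> n'" using mn' tgt.line_two_points by blast
  then obtain m n where mn: "m \<in> lns A" "n \<in> lns A" "m \<noteq> n"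
    using phi_onto[OF mn'(1)] phi_onto[OF mn'(2)] by blast
  then have "\<exists>k\<in>lns A. k \<noteq> l" by blast
  then show ?thesis using src.point_off_line[OF l] by blast
qed

text \<open>The key step: the images of the lines through a point are concurrent.  Otherwise
  they lie in a plane (they pairwise intersect), some line k misses that plane, and
  the preimage of k meets a line through the point, so k meets the plane.\<close>

lemma star_image_concurrent:
  assumes Q: "Q \<in> pts A"
  shows "\<exists>P. \<forall>x\<in>star A Q. P \<in> \<phi> x"
proof (rule ccontr)
  assume not_conc: "\<not> (\<exists>P. \<forall>x\<in>star A Q. P \<in> \<phi> x)"
  have "\<phi> ` star A Q \<subseteq> lns A'" using phi_line unfolding star_def by auto
  moreover have "\<And>a b. a \<in> \<phi> ` star A Q \<Longrightarrow> b \<in> \<phi> ` star A Q \<Longrightarrow> a \<inter> b \<noteq> {}"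
    using adj unfolding star_def by blast
  moreover have "\<not> (\<exists>P. \<forall>y\<in>\<phi> ` star A Q. P \<in> y)" using not_conc by auto
  ultimately obtain g h C where cr: "tgt.crossing g h C"
    and in_plane: "\<And>x. x \<in> star A Q \<Longrightarrow> \<phi> x \<subseteq> plane A' g h"
    using tgt.pairwise_meeting_lines_coplanar by (metis image_eqI)
  obtain k where k: "k \<in> lns A'" "k \<inter> plane A' g h = {}"
    using tgt.line_missing_plane[OF dim cr] by blast
  obtain l where l: "l \<in> lns A" "k = \<phi> l" using phi_onto[OF k(1)] by blast
  obtain x where x: "x \<in> star A Q" "l \<inter> x \<noteq> {}" using src.line_meets_star[OF l(1) Q] by blast
  have "\<phi> l \<inter> \<phi> x \<noteq> {}" using adj[OF l(1) _ x(2)] x(1) unfolding star_def by auto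
  then show False using in_plane[OF x(1)] k l by blast
qed

definition point_map :: "'p \<Rightarrow> 'q" where
  "point_map Q = (SOME P. \<forall>x\<in>star A Q. P \<in> \<phi> x)"

lemma point_map_on_image: "x \<in> lns A \<Longrightarrow> Q \<in> x \<Longrightarrow> point_map Q \<in> \<phi> x"
  using someI_ex[OF star_image_concurrent, of Q] src.line_subset
  unfolding point_map_def star_def by blast

lemma point_map_pts:
  assumes Q: "Q \<in> pts A"
  shows "point_map Q \<in> pts A'"
proof -
  obtain l where "l \<in> lns A" using phi_onto tgt.skew_lines[OF dim] by metis
  then obtain x where "x \<in> star A Q" using src.line_meets_star[OF _ Q] by blast
  then show ?thesis using point_map_on_image phi_line tgt.line_subset unfolding star_def by blast
qed

lemma point_map_intersection:
  assumes a: "a \<in> lns A" and b: "b \<in> lns A" and ab: "a \<noteq> b" and Q: "a \<inter> b = {Q}"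
  shows "\<phi> a \<inter> \<phi> b = {point_map Q}"
proof -
  have "point_map Q \<in> \<phi> a" "point_map Q \<in> \<phi> b" using point_map_on_image a b Q by auto
  moreover have "\<phi> a \<noteq> \<phi> b" using phi_eq a b ab by auto
  ultimately show ?thesis using tgt.meet_unique[OF phi_line[OF a] phi_line[OF b]] by blast
qed

text \<open>If two points Q, R have the same image, so does every point T off their line:
  the images of the distinct lines TQ and TR would otherwise share the two points
  point_map T and point_map Q.\<close>

lemma point_map_collapse_off_line:
  assumes Q: "Q \<in> pts A" and R: "R \<in> pts A" and T: "T \<in> pts A" and QR: "Q \<noteq> R"
    and T_off: "T \<notin> join A Q R" and same: "point_map Q = point_map R"
  shows "point_map T = point_map Q"
proof (rule ccontr)
  assume ne: "point_map T \<noteq> point_map Q"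
  have lQR: "join A Q R \<in> lns A" "Q \<in> join A Q R" "R \<in> join A Q R" using src.join[OF Q R QR] by auto
  have TQ: "T \<noteq> Q" and TR: "T \<noteq> R" using T_off lQR by auto
  have lTQ: "join A T Q \<in> lns A" "T \<in> join A T Q" "Q \<in> join A T Q" using src.join[OF T Q TQ] by auto
  have lTR: "join A T R \<in> lns A" "T \<in> join A T R" "R \<in> join A T R" using src.join[OF T R TR] by auto
  have "\<phi> (join A T Q) = \<phi> (join A T R)"
    using tgt.lines_eq[OF phi_line[OF lTQ(1)] phi_line[OF lTR(1)], of "point_map T" "point_map Q"]
      point_map_on_image[OF lTQ(1,2)] point_map_on_image[OF lTQ(1,3)]
      point_map_on_image[OF lTR(1,2)] point_map_on_image[OF lTR(1,3)] same ne by auto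
  then have "join A T Q = join A T R" using phi_eq lTQ lTR by auto
  then have "join A Q R = join A T Q" using src.join_unique[OF lTQ(1) lTQ(3) _ QR] lTR by auto
  then show False using T_off lTQ by auto
qed

text \<open>Hence two points with the same image force the point map to be constant: points
  on their line are reached via a point off the line.\<close>

lemma point_map_collapse:
  assumes Q: "Q \<in> pts A" and R: "R \<in> pts A" and QR: "Q \<noteq> R"
    and same: "point_map Q = point_map R" and T: "T \<in> pts A"
  shows "point_map T = point_map Q"
proof (cases "T \<in> join A Q R \<and> T \<noteq> Q")
  case False
  then show ?thesis using point_map_collapse_off_line[OF Q R T QR _ same] by auto
next
  case True
  have lQR: "join A Q R \<in> lns A" "Q \<in> join A Q R" using src.join[OF Q R QR] by auto
  obtain T0 where T0: "T0 \<in> pts A" "T0 \<notin> join A Q R" using src_point_off_line[OF lQR(1)] by blast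
  have QT0: "Q \<noteq> T0" using T0 lQR by auto
  have lQT0: "join A Q T0 \<in> lns A" "Q \<in> join A Q T0" "T0 \<in> join A Q T0"
    using src.join[OF Q T0(1) QT0] by auto
  have "T \<notin> join A Q T0"
  proof
    assume "T \<in> join A Q T0"
    then have "join A Q T0 = join A Q R"
      using src.lines_eq[OF lQT0(1) lQR(1) lQT0(2) _ lQR(2)] True by auto
    then show False using lQT0 T0 by auto
  qed
  moreover have "point_map T0 = point_map Q" using point_map_collapse_off_line[OF Q R T0(1) QR T0(2) same] .
  ultimately show ?thesis using point_map_collapse_off_line[OF Q T0(1) T QT0] by auto
qed

text \<open>Injectivity: a constant point map would put one point on every line of the
  target, which has skew lines.\<close>

lemma point_map_inj: "inj_on point_map (pts A)"
proof (rule inj_onI, rule ccontr)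
  fix Q R assume Q: "Q \<in> pts A" and R: "R \<in> pts A" and same: "point_map Q = point_map R"
    and QR: "Q \<noteq> R"
  have "point_map Q \<in> l'" if l': "l' \<in> lns A'" for l'
  proof -
    obtain l where l: "l \<in> lns A" "l' = \<phi> l" using phi_onto[OF l'] by blast
    obtain x where x: "x \<in> l" using src.line_two_points[OF l(1)] by blast
    then have "x \<in> pts A" using src.line_subset l by auto
    then show ?thesis using point_map_collapse[OF Q R QR same] point_map_on_image[OF l(1) x] l by auto
  qed
  then show False using tgt.no_point_on_all_lines[OF dim] by blast
qed

text \<open>Incidence is reflected: if the image of Q lies on the image of l, then Q lies on l
  (otherwise the line joining Q to a point of l would have the same image as l).\<close>

lemma incidence_reflected:
  assumes Q: "Q \<in> pts A" and l: "l \<in> lns A" and on: "point_map Q \<in> \<phi> l"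
  shows "Q \<in> l"
proof (rule ccontr)
  assume Q_off: "Q \<notin> l"
  obtain y where y: "y \<in> l" using src.line_two_points[OF l] by blast
  have yp: "y \<in> pts A" and yQ: "Q \<noteq> y" using y l src.line_subset Q_off by auto
  have m: "join A Q y \<in> lns A" "Q \<in> join A Q y" "y \<in> join A Q y" using src.join[OF Q yp yQ] by auto
  have "point_map Q \<noteq> point_map y" using point_map_inj Q yp yQ unfolding inj_on_def by blast
  then have "\<phi> (join A Q y) = \<phi> l"
    using tgt.lines_eq[OF phi_line[OF m(1)] phi_line[OF l], of "point_map Q" "point_map y"]
      point_map_on_image m y l on by auto
  then have "join A Q y = l" using phi_eq m l by auto
  then show False using m Q_off by auto
qed

lemma star_image:
  assumes Q: "Q \<in> pts A"
  shows "\<phi> ` star A Q = star A' (point_map Q)"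
proof
  show "\<phi> ` star A Q \<subseteq> star A' (point_map Q)"
    using point_map_on_image phi_line unfolding star_def by auto
  show "star A' (point_map Q) \<subseteq> \<phi> ` star A Q"
  proof
    fix l' assume "l' \<in> star A' (point_map Q)"
    then have l': "l' \<in> lns A'" "point_map Q \<in> l'" unfolding star_def by auto
    obtain l where l: "l \<in> lns A" "l' = \<phi> l" using phi_onto[OF l'(1)] by blast
    then have "Q \<in> l" using incidence_reflected[OF Q] l' by auto
    then show "l' \<in> \<phi> ` star A Q" using l unfolding star_def by auto
  qed
qed

lemma point_map_collinear:
  assumes "collinear A x y z"
  shows "collinear A' (point_map x) (point_map y) (point_map z)"
  using assms point_map_on_image phi_line unfolding collinear_def by meson

lemma point_map_noncollinear:
  assumes x: "x \<in> pts A" and y: "y \<in> pts A" and z: "z \<in> pts A"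
    and c: "collinear A' (point_map x) (point_map y) (point_map z)"
  shows "collinear A x y z"
proof -
  obtain l' where l': "l' \<in> lns A'" "point_map x \<in> l'" "point_map y \<in> l'" "point_map z \<in> l'"
    using c unfolding collinear_def by auto
  obtain l where l: "l \<in> lns A" "l' = \<phi> l" using phi_onto[OF l'(1)] by blast
  then show ?thesis
    using incidence_reflected[OF x] incidence_reflected[OF y] incidence_reflected[OF z] l'
    unfolding collinear_def by auto
qed

end

theorem theorem2:
  fixes A :: "'p affine_structure" and A' :: "'q affine_structure"
    and \<phi> :: "'p set \<Rightarrow> 'q set"
  assumes "affine_space A" and "affine_space A'" and "dim_ge_3 A'"
    and "bij_betw \<phi> (lns A) (lns A')"
    and "\<forall>a\<in>lns A. \<forall>b\<in>lns A. a \<inter> b \<noteq> {} \<longrightarrow> \<phi> a \<inter> \<phi> b \<noteq> {}"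
  shows "\<exists>lam :: 'p \<Rightarrow> 'q.
           (\<forall>a\<in>lns A. \<forall>b\<in>lns A. \<forall>Q. a \<noteq> b \<and> a \<inter> b = {Q} \<longrightarrow> \<phi> a \<inter> \<phi> b = {lam Q}) \<and>
           lam ` pts A \<subseteq> pts A' \<and>
           inj_on lam (pts A) \<and>
           (\<forall>x\<in>pts A. \<forall>y\<in>pts A. \<forall>z\<in>pts A.
              collinear A x y z \<longrightarrow> collinear A' (lam x) (lam y) (lam z)) \<and>
           (\<forall>x\<in>pts A. \<forall>y\<in>pts A. \<forall>z\<in>pts A.
              \<not> collinear A x y z \<longrightarrow> \<not> collinear A' (lam x) (lam y) (lam z)) \<and>
           (\<forall>Q\<in>pts A. \<phi> ` star A Q = star A' (lam Q))"
proof -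
  interpret adjacency_preserving A A' \<phi>
    using assms by unfold_locales (simp_all add: affine_geom_def)
  show ?thesis
  proof (intro exI[of _ point_map] conjI)
    show "\<forall>a\<in>lns A. \<forall>b\<in>lns A. \<forall>Q. a \<noteq> b \<and> a \<inter> b = {Q} \<longrightarrow> \<phi> a \<inter> \<phi> b = {point_map Q}"
      using point_map_intersection by blast
    show "point_map ` pts A \<subseteq> pts A'" using point_map_pts by blast
    show "inj_on point_map (pts A)" by (rule point_map_inj)
    show "\<forall>x\<in>pts A. \<forall>y\<in>pts A. \<forall>z\<in>pts A.
        collinear A x y z \<longrightarrow> collinear A' (point_map x) (point_map y) (point_map z)"
      using point_map_collinear by blast
    show "\<forall>x\<in>pts A. \<forall>y\<in>pts A. \<forall>z\<in>pts A.
        \<not> collinear A x y z \<longrightarrow> \<not> collinear A' (point_map x) (point_map y) (point_map z)"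
      using point_map_noncollinear by blast
    show "\<forall>Q\<in>pts A. \<phi> ` star A Q = star A' (point_map Q)" using star_image by blast
  qed
qed

end
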